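(* Let $R=k[x_{ij}\mid1\le i\le n,1\le j\le m]$ over a field $k$, $n\le m$, and fix pairwise disjoint index sets $\sigma_1,\dots,\sigma_r\subseteq[m]$, each of size $n$. For each $j$ and $\ell\ge1$ let $q^j_\ell:D_\ell(G^* )\otimes\bigwedge^{n+\ell}F\to\bigwedge^\ell U_j$ be the map sending $g^{*(\alpha)}\otimes f_{\tau_1}\wedge\cdots\wedge f_{\tau_\ell}\wedge f_{\sigma_j}\mapsto(-1)^n\sum_{L\in\mathcal L_{\alpha,\tau}}e_{L_1}\wedge\cdots\wedge e_{L_\ell}$ for every $\tau=(\tau_1<\cdots<\tau_\ell)$ with $\tau\cap\sigma_j=\varnothing$ and $|\alpha|=\ell$, and sending all basis elements $g^{*(\alpha)}\otimes f_\rho$ with $\rho\not\supseteq\sigma_j$ to $0$. Then $$\operatorname{rank}_k\left(\begin{pmatrix}q^1_\ell\\ \vdots\\ q^r_\ell\end{pmatrix}\otimes k\right)=\binom{n+\ell-1}{\ell}\sum_{i=1}^r(-1)^{i+1}\binom{r}{i}\binom{m-in}{\ell-(i-1)n}.$$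
   Context: $F$ free with basis $f_1,\dots,f_m$, $G$ free with basis $g_1,\dots,g_n$, dual basis $g_i^*$; $D_\ell(G^* )$ the divided power with basis $g^{*(\alpha)}=g_1^{*(\alpha_1)}\cdots g_n^{*(\alpha_n)}$, $|\alpha|=\ell$; $f_\rho$ is the wedge of $f_s$, $s\in\rho$, in increasing order, and $f_{\sigma_j}=f_{\sigma_{j1}}\wedge\cdots\wedge f_{\sigma_{jn}}$. $U_j$ is free with basis $e_{is}$, $1\le i\le n$, $s\notin\sigma_j$, with $e_{(i,s)}=e_{is}$. For $\tau=(\tau_1<\dots<\tau_\ell)$ and $\alpha\in\mathbb Z^n_{\ge0}$, $\mathcal L_{\alpha,\tau}$ is the set of sets $L=\{(r_1,\tau_1),\dots,(r_\ell,\tau_\ell)\}$ with $r_s\in\{i:\alpha_i\ne0\}$ and $|\{s:r_s=j\}|=\alpha_j$ for all $j$, written $L=(L_1,\dots,L_\ell)$ with $L_s=(r_s,\tau_s)$. The stacked map goes to $\bigoplus_j\bigwedge^\ell U_j$. Convention: $\binom{a}{b}=0$ if $b>a$ or $b<0$. *)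

theory Defs
  imports Complex_Main "HOL-Library.Function_Algebras"
begin

definition binom_int :: "int \<Rightarrow> int \<Rightarrow> int" where
  "binom_int a b = (if 0 \<le> b \<and> b \<le> a then int (nat a choose nat b) else 0)"

definition multi_idx :: "nat \<Rightarrow> nat \<Rightarrow> (nat \<Rightarrow> nat) set" where
  "multi_idx n l = {\<alpha>. (\<forall>i. i \<notin> {1..n} \<longrightarrow> \<alpha> i = 0) \<and> (\<Sum>i\<in>{1..n}. \<alpha> i) = l}"

definition Lset :: "(nat \<Rightarrow> nat) \<Rightarrow> nat set \<Rightarrow> (nat \<times> nat) set set" where
  "Lset \<alpha> \<tau> = {L. \<exists>r::nat \<Rightarrow> nat. L = (\<lambda>s. (r s, s)) ` \<tau> \<and>
      (\<forall>s\<in>\<tau>. \<alpha> (r s) \<noteq> 0) \<and> (\<forall>j. card {s\<in>\<tau>. r s = j} = \<alpha> j)}"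

text \<open>Sign relating f_tau wedge f_sigma to f_(tau union sigma) (increasing order):
  number of inversions.\<close>
definition wedge_sign :: "nat set \<Rightarrow> nat set \<Rightarrow> nat" where
  "wedge_sign \<tau> \<sigma> = card {(a, b). a \<in> \<tau> \<and> b \<in> \<sigma> \<and> b < a}"

text \<open>Row index set of the stacked map: (j, S) with S an l-subset of the basis
  {e_is : 1<=i<=n, s in [m] - sigma_j} of U_j; S stands for the wedge of its elements
  ordered by the second coordinate s (then by i).\<close>
definition row_idx :: "nat \<Rightarrow> nat \<Rightarrow> nat \<Rightarrow> (nat \<Rightarrow> nat set) \<Rightarrow> nat \<Rightarrow> (nat \<times> (nat \<times> nat) set) set" where
  "row_idx n m r \<sigma> l = {(j, S). j \<in> {1..r} \<and>
      S \<subseteq> {(i, s). i \<in> {1..n} \<and> s \<in> {1..m} \<and> s \<notin> \<sigma> j} \<and> card S = l}"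

text \<open>Column of the stacked matrix (q^1_l; ...; q^r_l) tensor k at the basis element
  g^{*(alpha)} tensor f_rho, as a k-valued function on row indices.\<close>
definition q_col :: "nat \<Rightarrow> nat \<Rightarrow> nat \<Rightarrow> (nat \<Rightarrow> nat set) \<Rightarrow> nat \<Rightarrow>
    (nat \<Rightarrow> nat) \<Rightarrow> nat set \<Rightarrow> nat \<times> (nat \<times> nat) set \<Rightarrow> 'k::field" where
  "q_col n m r \<sigma> l \<alpha> \<rho> = (\<lambda>(j, S).
     if (j, S) \<in> row_idx n m r \<sigma> l \<and> \<sigma> j \<subseteq> \<rho> \<and> S \<in> Lset \<alpha> (\<rho> - \<sigma> j)
     then (-1) ^ n * (-1) ^ wedge_sign (\<rho> - \<sigma> j) (\<sigma> j) else 0)"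

definition q_cols :: "nat \<Rightarrow> nat \<Rightarrow> nat \<Rightarrow> (nat \<Rightarrow> nat set) \<Rightarrow> nat \<Rightarrow>
    (nat \<times> (nat \<times> nat) set \<Rightarrow> 'k::field) set" where
  "q_cols n m r \<sigma> l = {q_col n m r \<sigma> l \<alpha> \<rho> | \<alpha> \<rho>.
      \<alpha> \<in> multi_idx n l \<and> \<rho> \<subseteq> {1..m} \<and> card \<rho> = n + l}"

definition q_rank :: "'k::field itself \<Rightarrow> nat \<Rightarrow> nat \<Rightarrow> nat \<Rightarrow> (nat \<Rightarrow> nat set) \<Rightarrow> nat \<Rightarrow> nat" where
  "q_rank _ n m r \<sigma> l =
     vector_space.dim (\<lambda>(c::'k) f x. c * f x) (q_cols n m r \<sigma> l :: (_ \<Rightarrow> 'k) set)"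

end

theory Submission
  imports Defs
begin

text \<open>The column of g*(alpha) (x) f_rho has a nonzero entry in row (j, S) only if sigma_j is
  contained in rho and S lies in L(alpha, rho - sigma_j). The row then determines rho, as
  sigma_j together with the second components of S, and alpha, whose i-th entry counts the
  pairs of S with first component i. So distinct nonzero columns have disjoint supports and
  the rank is the number of nonzero columns. As L(alpha, tau) is never empty, a column is
  nonzero exactly when rho contains some sigma_j. The rank is therefore the number of
  multi-indices alpha (stars and bars) times the number of (n + l)-subsets of [m] containing
  a block sigma_j, which inclusion-exclusion over the disjoint blocks counts.\<close>

lemma binom_int_of_nat [simp]: "binom_int (int a) (int b) = int (a choose b)"
  by (auto simp: binom_int_def binomial_eq_0)

lemma bij_betw_multi_idx_lists:
  "bij_betw (\<lambda>\<alpha>. map \<alpha> [1..<Suc n]) (multi_idx n l) {xs. length xs = n \<and> sum_list xs = l}"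
proof -
  define g where "g xs i = (if i \<in> {1..n} then xs ! (i - 1) else 0)" for xs :: "nat list" and i
  have sum_list_map: "sum_list (map \<alpha> [1..<Suc n]) = (\<Sum>i\<in>{1..n}. \<alpha> i)" for \<alpha> :: "nat \<Rightarrow> nat"
    by (metis atLeastLessThanSuc_atLeastAtMost distinct_upt set_upt sum_list_distinct_conv_sum_set)
  have "g xs \<in> multi_idx n l" if "length xs = n" "sum_list xs = l" for xs
  proof -
    have "(\<Sum>i\<in>{1..n}. g xs i) = (\<Sum>i<n. xs ! i)"
      by (rule sum.reindex_bij_witness[where i = Suc and j = "\<lambda>i. i - 1"]) (auto simp: g_def)
    then show ?thesis
      using that by (simp add: multi_idx_def g_def sum_list_sum_nth atLeast0LessThan)
  qed
  then have "g ` {xs. length xs = n \<and> sum_list xs = l} \<subseteq> multi_idx n l"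
    by blast
  moreover have "(\<lambda>\<alpha>. map \<alpha> [1..<Suc n]) ` multi_idx n l \<subseteq> {xs. length xs = n \<and> sum_list xs = l}"
    using sum_list_map by (auto simp: multi_idx_def simp del: upt_Suc)
  moreover have "\<forall>\<alpha>\<in>multi_idx n l. g (map \<alpha> [1..<Suc n]) = \<alpha>"
    by (auto simp: multi_idx_def g_def fun_eq_iff simp del: upt_Suc)
  moreover have "\<forall>xs\<in>{xs. length xs = n \<and> sum_list xs = l}. map (g xs) [1..<Suc n] = xs"
    by (auto simp: g_def intro!: nth_equalityI simp del: upt_Suc)
  ultimately show ?thesis
    by (intro bij_betw_byWitness[where f' = g])
qed

lemma finite_multi_idx: "finite (multi_idx n l)"
proof -
  have "{xs. length xs = n \<and> sum_list xs = l} \<subseteq> {xs. set xs \<subseteq> {0..l} \<and> length xs = n}"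
    using member_le_sum_list by fastforce
  then have "finite {xs. length xs = n \<and> sum_list xs = l}"
    by (rule finite_subset) (simp add: finite_lists_length_eq)
  then show ?thesis
    using bij_betw_finite[OF bij_betw_multi_idx_lists] by blast
qed

lemma card_multi_idx: "card (multi_idx n l) = (n + l - 1) choose l"
  using bij_betw_same_card[OF bij_betw_multi_idx_lists] card_length_sum_list
  by (simp add: add.commute)

lemma card_supersets_binom_int:
  assumes "finite A" "U \<subseteq> A"
  shows "int (card {\<rho>. \<rho> \<subseteq> A \<and> card \<rho> = c \<and> U \<subseteq> \<rho>}) =
    binom_int (int (card A) - int (card U)) (int c - int (card U))"
proof (cases "card U \<le> c")
  case True
  have "finite U" using assms finite_subset by blast
  have "bij_betw (\<lambda>\<rho>. \<rho> - U) {\<rho>. \<rho> \<subseteq> A \<and> card \<rho> = c \<and> U \<subseteq> \<rho>} {B. B \<subseteq> A - U \<and> card B = c - card U}"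
  proof (rule bij_betw_byWitness[where f' = "\<lambda>B. B \<union> U"])
    show "(\<lambda>\<rho>. \<rho> - U) ` {\<rho>. \<rho> \<subseteq> A \<and> card \<rho> = c \<and> U \<subseteq> \<rho>} \<subseteq> {B. B \<subseteq> A - U \<and> card B = c - card U}"
      using \<open>finite U\<close> by (auto simp: card_Diff_subset)
    show "(\<lambda>B. B \<union> U) ` {B. B \<subseteq> A - U \<and> card B = c - card U} \<subseteq> {\<rho>. \<rho> \<subseteq> A \<and> card \<rho> = c \<and> U \<subseteq> \<rho>}"
      using True assms \<open>finite U\<close> by (auto; subst card_Un_disjoint) (auto intro: finite_subset)
  qed auto
  then have "card {\<rho>. \<rho> \<subseteq> A \<and> card \<rho> = c \<and> U \<subseteq> \<rho>} = (card A - card U) choose (c - card U)"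
    using assms by (simp add: bij_betw_same_card n_subsets card_Diff_subset \<open>finite U\<close>)
  moreover have "card U \<le> card A"
    using assms by (rule card_mono)
  ultimately show ?thesis
    using True by (simp add: of_nat_diff flip: binom_int_of_nat)
next
  case False
  then have no_superset: "{\<rho>. \<rho> \<subseteq> A \<and> card \<rho> = c \<and> U \<subseteq> \<rho>} = {}"
    using assms by (auto dest: card_mono[OF rev_finite_subset[OF assms(1)]])
  show ?thesis
    unfolding no_superset using False by (simp add: binom_int_def)
qed

lemma int_card_UN_inclusion_exclusion:
  assumes "finite I" "\<And>i. i \<in> I \<Longrightarrow> finite (X i)"
  shows "int (card (\<Union>(X ` I))) =
    (\<Sum>B | B \<subseteq> I \<and> B \<noteq> {}. (- 1) ^ (card B + 1) * int (card (\<Inter>(X ` B))))"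
proof -
  interpret Incl_Excl finite "int o card"
    by unfold_locales (auto simp: card_Un_disjnt)
  show ?thesis
    using restricted_indexed[OF assms] by simp
qed

lemma sum_nonempty_subsets_by_card:
  fixes h :: "nat \<Rightarrow> 'a::comm_semiring_1"
  assumes "finite I"
  shows "(\<Sum>B | B \<subseteq> I \<and> B \<noteq> {}. h (card B)) = (\<Sum>i=1..card I. of_nat (card I choose i) * h i)"
proof -
  let ?S = "{B. B \<subseteq> I \<and> B \<noteq> {}}"
  have "card ` ?S \<subseteq> {1..card I}"
    using assms by (auto simp: Suc_le_eq card_gt_0_iff card_mono dest: finite_subset)
  then have "(\<Sum>B\<in>?S. h (card B)) = (\<Sum>i=1..card I. \<Sum>B\<in>{B\<in>?S. card B = i}. h (card B))"
    using assms by (intro sum.group[symmetric]) auto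
  also have "\<dots> = (\<Sum>i=1..card I. of_nat (card I choose i) * h i)"
  proof (rule sum.cong[OF refl])
    fix i assume "i \<in> {1..card I}"
    then have "{B\<in>?S. card B = i} = {B. B \<subseteq> I \<and> card B = i}"
      by auto
    then show "(\<Sum>B\<in>{B\<in>?S. card B = i}. h (card B)) = of_nat (card I choose i) * h i"
      using assms by (simp add: n_subsets)
  qed
  finally show ?thesis by simp
qed

lemma int_card_subsets_containing_some_block:
  assumes "finite A" "finite I"
    and blocks: "\<And>i. i \<in> I \<Longrightarrow> \<sigma> i \<subseteq> A \<and> card (\<sigma> i) = n"
    and disjoint: "\<And>i j. i \<in> I \<Longrightarrow> j \<in> I \<Longrightarrow> i \<noteq> j \<Longrightarrow> \<sigma> i \<inter> \<sigma> j = {}"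
  shows "int (card {\<rho>. \<rho> \<subseteq> A \<and> card \<rho> = c \<and> (\<exists>i\<in>I. \<sigma> i \<subseteq> \<rho>)}) =
    (\<Sum>k=1..card I. (-1) ^ (k + 1) * int (card I choose k) *
        binom_int (int (card A) - int k * int n) (int c - int k * int n))"
proof -
  define X where "X i = {\<rho>. \<rho> \<subseteq> A \<and> card \<rho> = c \<and> \<sigma> i \<subseteq> \<rho>}" for i
  define h where "h k = (-1) ^ (k + 1) *
    binom_int (int (card A) - int k * int n) (int c - int k * int n)" for k :: nat
  have "{\<rho>. \<rho> \<subseteq> A \<and> card \<rho> = c \<and> (\<exists>i\<in>I. \<sigma> i \<subseteq> \<rho>)} = \<Union>(X ` I)"
    by (auto simp: X_def)
  moreover have "finite (X i)" for i
    using \<open>finite A\<close> by (simp add: X_def)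
  moreover have "(- 1) ^ (card B + 1) * int (card (\<Inter>(X ` B))) = h (card B)"
    if "B \<subseteq> I" "B \<noteq> {}" for B
  proof -
    have "finite B" using that \<open>finite I\<close> finite_subset by blast
    have "\<Inter>(X ` B) = {\<rho>. \<rho> \<subseteq> A \<and> card \<rho> = c \<and> \<Union>(\<sigma> ` B) \<subseteq> \<rho>}"
      using that by (auto simp: X_def)
    moreover have "card (\<Union>(\<sigma> ` B)) = card B * n"
    proof -
      have "card (\<Union>(\<sigma> ` B)) = (\<Sum>i\<in>B. card (\<sigma> i))"
        using \<open>finite B\<close> \<open>finite A\<close> that blocks disjoint
        by (intro card_UN_disjoint) (blast intro: rev_finite_subset)+
      also have "\<dots> = card B * n"
        using that blocks by (simp add: subset_iff)
      finally show ?thesis .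
    qed
    moreover have "\<Union>(\<sigma> ` B) \<subseteq> A"
      using that blocks by blast
    ultimately show ?thesis
      using card_supersets_binom_int[OF \<open>finite A\<close>, of "\<Union>(\<sigma> ` B)" c] by (simp add: h_def)
  qed
  ultimately have "int (card {\<rho>. \<rho> \<subseteq> A \<and> card \<rho> = c \<and> (\<exists>i\<in>I. \<sigma> i \<subseteq> \<rho>)}) =
      (\<Sum>B | B \<subseteq> I \<and> B \<noteq> {}. h (card B))"
    using int_card_UN_inclusion_exclusion[OF \<open>finite I\<close>, of X] by simp
  also have "\<dots> = (\<Sum>k=1..card I. int (card I choose k) * h k)"
    using \<open>finite I\<close> by (rule sum_nonempty_subsets_by_card)
  finally show ?thesis
    by (simp add: h_def mult.assoc mult.left_commute)
qed

lemma sum_apply: "(\<Sum>x\<in>A. F x) y = (\<Sum>x\<in>A. (F x :: 'a \<Rightarrow> 'b::comm_monoid_add) y)"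
  by (induct A rule: infinite_finite_induct) auto

lemma vector_space_fun: "vector_space (\<lambda>(c::'k::field) (f::'a \<Rightarrow> 'k) x. c * f x)"
  by unfold_locales (auto simp: fun_eq_iff algebra_simps)

lemma independent_if_disjoint_supports:
  fixes C :: "('a \<Rightarrow> 'k::field) set"
  assumes "finite C" "0 \<notin> C"
    and disj: "\<And>f g x. f \<in> C \<Longrightarrow> g \<in> C \<Longrightarrow> f x \<noteq> 0 \<Longrightarrow> g x \<noteq> 0 \<Longrightarrow> f = g"
  shows "\<not> module.dependent (\<lambda>c f x. c * f x) C"
proof -
  interpret V: vector_space "\<lambda>(c::'k) (f::'a \<Rightarrow> 'k) x. c * f x"
    by (rule vector_space_fun)
  show ?thesis
  proof (rule V.independent_if_scalars_zero[OF \<open>finite C\<close>])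
    fix u f
    assume sum0: "(\<Sum>g\<in>C. (\<lambda>x. u g * g x)) = 0" and f: "f \<in> C"
    obtain y where y: "f y \<noteq> 0"
      using f \<open>0 \<notin> C\<close> by (metis ext zero_fun_def)
    have "0 = (\<Sum>g\<in>C. u g * g y)"
      using fun_cong[OF sum0, of y] by (simp add: sum_apply)
    also have "\<dots> = u f * f y"
      using disj[OF _ f _ y] by (intro sum.remove[OF \<open>finite C\<close> f, THEN trans]) (auto intro!: sum.neutral)
    finally show "u f = 0" using y by simp
  qed
qed

lemma dim_image_eq_card_nonzero_if_disjoint_supports:
  fixes col :: "'b \<Rightarrow> 'a \<Rightarrow> 'k::field"
  assumes "finite X"
    and disj: "\<And>a b x. a \<in> X \<Longrightarrow> b \<in> X \<Longrightarrow> col a x \<noteq> 0 \<Longrightarrow> col b x \<noteq> 0 \<Longrightarrow> a = b"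
  shows "vector_space.dim (\<lambda>c f x. c * f x) (col ` X) = card {a\<in>X. col a \<noteq> 0}"
proof -
  interpret V: vector_space "\<lambda>(c::'k) (f::'a \<Rightarrow> 'k) x. c * f x"
    by (rule vector_space_fun)
  have nonzero: "col ` X - {0} = col ` {a\<in>X. col a \<noteq> 0}"
    by (simp add: image_iff set_eq_iff) metis
  have "V.independent (col ` X - {0})"
    using assms by (intro independent_if_disjoint_supports) auto
  then have "V.dim (col ` X - {0}) = card (col ` X - {0})"
    by (rule V.dim_eq_card_independent)
  moreover have "V.dim (col ` X - {0}) = V.dim (col ` X)"
    by (metis V.dim_span V.span_delete_0)
  moreover have "inj_on col {a\<in>X. col a \<noteq> 0}"
  proof (rule inj_onI)
    fix a b assume a: "a \<in> {a\<in>X. col a \<noteq> 0}" and b: "b \<in> {a\<in>X. col a \<noteq> 0}" and "col a = col b"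
    from a obtain x where "col a x \<noteq> 0"
      by (auto simp: fun_eq_iff)
    then show "a = b"
      using disj a b \<open>col a = col b\<close> by simp
  qed
  ultimately show ?thesis
    by (simp add: nonzero card_image)
qed

lemma exists_map_with_fiber_cards:
  assumes "finite I" "finite \<tau>" "card \<tau> = (\<Sum>i\<in>I. k i)"
  obtains f where "f ` \<tau> \<subseteq> I" "\<And>i. i \<in> I \<Longrightarrow> card {s\<in>\<tau>. f s = i} = k i"
  using assms
proof (induction I arbitrary: \<tau> thesis rule: finite_induct)
  case empty
  then show ?case by simp
next
  case (insert a I)
  have "k a \<le> card \<tau>"
    using insert.prems(3) insert.hyps by simp
  then obtain A where A: "A \<subseteq> \<tau>" "card A = k a"
    by (meson obtain_subset_with_card_n)
  have "card (\<tau> - A) = (\<Sum>i\<in>I. k i)"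
    using A insert.prems(2,3) insert.hyps by (simp add: card_Diff_subset rev_finite_subset[of \<tau> A])
  then obtain f where f: "f ` (\<tau> - A) \<subseteq> I" "\<And>i. i \<in> I \<Longrightarrow> card {s\<in>\<tau> - A. f s = i} = k i"
    using insert.IH insert.prems(2) by blast
  define f' where "f' s = (if s \<in> A then a else f s)" for s
  have fiber_a: "{s\<in>\<tau>. f' s = a} = A"
    using A f insert.hyps(2) by (auto simp: f'_def)
  have fiber_I: "{s\<in>\<tau>. f' s = i} = {s\<in>\<tau> - A. f s = i}" if "i \<in> I" for i
    using that insert.hyps(2) by (auto simp: f'_def)
  show ?case
  proof (rule insert.prems(1))
    show "f' ` \<tau> \<subseteq> insert a I"
      using f(1) by (auto simp: f'_def)
    fix i assume "i \<in> insert a I"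
    then consider "i = a" | "i \<in> I" by blast
    then show "card {s\<in>\<tau>. f' s = i} = k i"
      by cases (simp add: fiber_a A(2), metis fiber_I f(2))
  qed
qed

lemma Lset_snd_image: "S \<in> Lset \<alpha> \<tau> \<Longrightarrow> snd ` S = \<tau>"
  unfolding Lset_def by (force simp: image_image)

lemma Lset_fiber_card:
  assumes "S \<in> Lset \<alpha> \<tau>"
  shows "card {p\<in>S. fst p = j} = \<alpha> j"
proof -
  obtain f where S: "S = (\<lambda>s. (f s, s)) ` \<tau>" and fib: "card {s\<in>\<tau>. f s = j} = \<alpha> j"
    using assms unfolding Lset_def by blast
  have "{p\<in>S. fst p = j} = (\<lambda>s. (f s, s)) ` {s\<in>\<tau>. f s = j}"
    by (auto simp: S)
  then show ?thesis
    using fib by (simp add: card_image inj_on_def)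
qed

lemma card_Lset: "S \<in> Lset \<alpha> \<tau> \<Longrightarrow> card S = card \<tau>"
  unfolding Lset_def by (force intro: card_image inj_onI)

lemma Lset_exists:
  assumes "\<alpha> \<in> multi_idx n l" "finite \<tau>" "card \<tau> = l"
  obtains S where "S \<in> Lset \<alpha> \<tau>" "S \<subseteq> {1..n} \<times> \<tau>"
proof -
  have \<alpha>: "(\<Sum>i\<in>{1..n}. \<alpha> i) = l" "\<And>i. i \<notin> {1..n} \<Longrightarrow> \<alpha> i = 0"
    using assms(1) by (auto simp: multi_idx_def)
  obtain f where f: "f ` \<tau> \<subseteq> {1..n}" "\<And>i. i \<in> {1..n} \<Longrightarrow> card {s\<in>\<tau>. f s = i} = \<alpha> i"
    by (rule exists_map_with_fiber_cards[of "{1..n}" \<tau> \<alpha>]) (use assms(2,3) \<alpha>(1) in simp_all)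
  have fib: "card {s\<in>\<tau>. f s = i} = \<alpha> i" for i
  proof (cases "i \<in> {1..n}")
    case False
    then have "{s\<in>\<tau>. f s = i} = {}" using f(1) by blast
    then show ?thesis using False \<alpha>(2) by (metis card.empty)
  qed (rule f(2))
  have "\<alpha> (f s) \<noteq> 0" if "s \<in> \<tau>" for s
  proof -
    have "card {s'\<in>\<tau>. f s' = f s} > 0"
      using that assms(2) by (auto simp: card_gt_0_iff)
    then show ?thesis using fib[of "f s"] by simp
  qed
  then have "(\<lambda>s. (f s, s)) ` \<tau> \<in> Lset \<alpha> \<tau>"
    unfolding Lset_def using fib by blast
  moreover have "(\<lambda>s. (f s, s)) ` \<tau> \<subseteq> {1..n} \<times> \<tau>"
    using f(1) by auto
  ultimately show ?thesis by (rule that)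
qed

lemma q_col_nonzero_unique:
  assumes "q_col n m r \<sigma> l \<alpha> \<rho> x \<noteq> (0::'k::field)" "q_col n m r \<sigma> l \<alpha>' \<rho>' x \<noteq> (0::'k)"
  shows "\<alpha> = \<alpha>' \<and> \<rho> = \<rho>'"
proof -
  obtain j S where x: "x = (j, S)" by (cases x)
  have \<rho>: "\<sigma> j \<subseteq> \<rho>" "S \<in> Lset \<alpha> (\<rho> - \<sigma> j)"
    using assms(1) unfolding x q_col_def by (simp_all split: if_splits)
  have \<rho>': "\<sigma> j \<subseteq> \<rho>'" "S \<in> Lset \<alpha>' (\<rho>' - \<sigma> j)"
    using assms(2) unfolding x q_col_def by (simp_all split: if_splits)
  have "\<rho> - \<sigma> j = \<rho>' - \<sigma> j"
    using Lset_snd_image[OF \<rho>(2)] Lset_snd_image[OF \<rho>'(2)] by simp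
  with \<rho>(1) \<rho>'(1) have "\<rho> = \<rho>'" by blast
  moreover have "\<alpha> = \<alpha>'"
    using Lset_fiber_card[OF \<rho>(2)] Lset_fiber_card[OF \<rho>'(2)] by (metis ext)
  ultimately show ?thesis by simp
qed

lemma q_col_nonzero_iff:
  assumes "\<alpha> \<in> multi_idx n l" "\<rho> \<subseteq> {1..m}" "card \<rho> = n + l"
    and \<sigma>: "\<forall>j\<in>{1..r}. \<sigma> j \<subseteq> {1..m} \<and> card (\<sigma> j) = n"
  shows "q_col n m r \<sigma> l \<alpha> \<rho> \<noteq> (0::_ \<Rightarrow> 'k::field) \<longleftrightarrow> (\<exists>j\<in>{1..r}. \<sigma> j \<subseteq> \<rho>)"
proof
  assume "q_col n m r \<sigma> l \<alpha> \<rho> \<noteq> (0::_ \<Rightarrow> 'k)"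
  then obtain j S where "(q_col n m r \<sigma> l \<alpha> \<rho> (j, S) :: 'k) \<noteq> 0"
    by (metis ext surj_pair zero_fun_def)
  then show "\<exists>j\<in>{1..r}. \<sigma> j \<subseteq> \<rho>"
    unfolding q_col_def row_idx_def by (auto split: if_splits)
next
  assume "\<exists>j\<in>{1..r}. \<sigma> j \<subseteq> \<rho>"
  then obtain j where j: "j \<in> {1..r}" "\<sigma> j \<subseteq> \<rho>" by blast
  have "finite \<rho>"
    using assms(2) by (rule finite_subset) simp
  moreover have "card (\<rho> - \<sigma> j) = l"
    using j \<sigma> assms(3) \<open>finite \<rho>\<close> by (simp add: card_Diff_subset rev_finite_subset[of \<rho>])
  ultimately obtain S where S: "S \<in> Lset \<alpha> (\<rho> - \<sigma> j)" "S \<subseteq> {1..n} \<times> (\<rho> - \<sigma> j)"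
    using Lset_exists[OF assms(1)] by blast
  have "(j, S) \<in> row_idx n m r \<sigma> l"
    using j(1) S assms(2) card_Lset[OF S(1)] \<open>card (\<rho> - \<sigma> j) = l\<close>
    unfolding row_idx_def by auto
  then have "(q_col n m r \<sigma> l \<alpha> \<rho> (j, S) :: 'k) \<noteq> 0"
    using j(2) S(1) by (simp add: q_col_def)
  then show "q_col n m r \<sigma> l \<alpha> \<rho> \<noteq> (0::_ \<Rightarrow> 'k)"
    by (metis zero_fun_def)
qed

lemma q_rank_eq_card:
  assumes "\<forall>j\<in>{1..r}. \<sigma> j \<subseteq> {1..m} \<and> card (\<sigma> j) = n"
  shows "q_rank TYPE('k::field) n m r \<sigma> l =
    card (multi_idx n l) * card {\<rho>. \<rho> \<subseteq> {1..m} \<and> card \<rho> = n + l \<and> (\<exists>j\<in>{1..r}. \<sigma> j \<subseteq> \<rho>)}"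
    (is "_ = card ?M * card ?N")
proof -
  define col where "col = (\<lambda>(\<alpha>, \<rho>). q_col n m r \<sigma> l \<alpha> \<rho> :: _ \<Rightarrow> 'k)"
  define R where "R = {\<rho>. \<rho> \<subseteq> {1..m} \<and> card \<rho> = n + l}"
  have "finite R"
    unfolding R_def by (rule finite_subset[of _ "Pow {1..m}"]) auto
  have "q_cols n m r \<sigma> l = col ` (?M \<times> R)"
    by (auto simp: q_cols_def col_def R_def)
  moreover have "a = b" if "col a x \<noteq> 0" "col b x \<noteq> 0" for a b x
  proof -
    obtain \<alpha> \<rho> \<alpha>' \<rho>' where "a = (\<alpha>, \<rho>)" "b = (\<alpha>', \<rho>')"
      by fastforce
    then show ?thesis
      using q_col_nonzero_unique[of n m r \<sigma> l \<alpha> \<rho> x \<alpha>' \<rho>'] that by (simp add: col_def)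
  qed
  ultimately have "q_rank TYPE('k) n m r \<sigma> l = card {a \<in> ?M \<times> R. col a \<noteq> 0}"
    unfolding q_rank_def using finite_multi_idx \<open>finite R\<close>
    by (simp add: dim_image_eq_card_nonzero_if_disjoint_supports)
  also have "{a \<in> ?M \<times> R. col a \<noteq> 0} = ?M \<times> ?N"
  proof -
    have "col (\<alpha>, \<rho>) \<noteq> 0 \<longleftrightarrow> \<rho> \<in> ?N" if "\<alpha> \<in> ?M" "\<rho> \<in> R" for \<alpha> \<rho>
      using q_col_nonzero_iff[OF that(1) _ _ assms, of \<rho>] that by (simp add: col_def R_def)
    then show ?thesis
      by (auto simp: R_def)
  qed
  finally show ?thesis
    by (simp add: card_cartesian_product)
qed

theorem lemma5p5:
  fixes n m r l :: nat and \<sigma> :: "nat \<Rightarrow> nat set"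
  assumes "n \<le> m"
    and "\<forall>j\<in>{1..r}. \<sigma> j \<subseteq> {1..m} \<and> card (\<sigma> j) = n"
    and "\<forall>i\<in>{1..r}. \<forall>j\<in>{1..r}. i \<noteq> j \<longrightarrow> \<sigma> i \<inter> \<sigma> j = {}"
    and "l \<ge> 1"
  shows "int (q_rank TYPE('k::field) n m r \<sigma> l) =
     binom_int (int (n + l - 1)) (int l) *
     (\<Sum>i=1..r. (-1) ^ (i + 1) * int (r choose i) *
        binom_int (int m - int i * int n) (int l - (int i - 1) * int n))"
proof -
  let ?N = "{\<rho>. \<rho> \<subseteq> {1..m} \<and> card \<rho> = n + l \<and> (\<exists>j\<in>{1..r}. \<sigma> j \<subseteq> \<rho>)}"
  have "int (q_rank TYPE('k) n m r \<sigma> l) = int (card (multi_idx n l)) * int (card ?N)"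
    by (simp add: q_rank_eq_card[OF assms(2)])
  also have "int (card (multi_idx n l)) = binom_int (int (n + l - 1)) (int l)"
    by (simp add: card_multi_idx)
  also have "int (card ?N) = (\<Sum>i=1..r. (-1) ^ (i + 1) * int (r choose i) *
      binom_int (int m - int i * int n) (int (n + l) - int i * int n))"
    using int_card_subsets_containing_some_block[of "{1..m}" "{1..r}" \<sigma> n "n + l"] assms(2,3)
    by simp
  also have "\<dots> = (\<Sum>i=1..r. (-1) ^ (i + 1) * int (r choose i) *
      binom_int (int m - int i * int n) (int l - (int i - 1) * int n))"
    by (simp add: algebra_simps)
  finally show ?thesis .
qed

end
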